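(* Let $n,N\in\mathbb{N}$, let $\Omega\subseteq\mathbb{R}^n$ be open and let $\mathrm{H}\in C^2(\Omega\times\mathbb{R}^N\times\mathbb{R}^{N\times n})$, $\mathrm{H}=\mathrm{H}(x,\eta,P)$. Let $u\in C^2(\Omega;\mathbb{R}^N)$ solve \[ \mathrm{H}_P(\cdot,u,\mathrm{D}u)\,\mathrm{D}\big(\mathrm{H}(\cdot,u,\mathrm{D}u)\big)=0\quad\text{on }\Omega, \] and assume that (a) the $N\times n$ matrix field $\mathrm{H}_P(\cdot,u,\mathrm{D}u)$ has full rank on $\Omega$, and (b) there exists $c>0$ such that \[ \big(\xi^\top\mathrm{H}_P(x,\eta,P)\big)\cdot\big(\xi^\top P\big)\ \ge\ c\,\big|\xi^\top\mathrm{H}_P(x,\eta,P)\big|^2 \] for all $\xi\in\mathbb{R}^N$ and all $(x,\eta,P)\in\Omega\times\mathbb{R}^N\times\mathbb{R}^{N\times n}$. Then for every open set $\mathcal{O}\Subset\Omega$, \[ \sup_{\mathcal{O}}\mathrm{H}(\cdot,u,\mathrm{D}u)=\max_{\partial\mathcal{O}}\mathrm{H}(\cdot,u,\mathrm{D}u),\qquad \inf_{\mathcal{O}}\mathrm{H}(\cdot,u,\mathrm{D}u)=\min_{\partial\mathcal{O}}\mathrm{H}(\cdot,u,\mathrm{D}u). \]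
   Context: $\mathrm{D}u$ is the $N\times n$ gradient matrix of $u$; $\mathrm{H}_P$ is the derivative of $\mathrm{H}$ with respect to $P\in\mathbb{R}^{N\times n}$, an $N\times n$ matrix; $\mathrm{H}_P(\cdot,u,\mathrm{D}u)\,\mathrm{D}(\mathrm{H}(\cdot,u,\mathrm{D}u))$ is the matrix–vector product of this matrix with the gradient of the scalar function $x\mapsto\mathrm{H}(x,u(x),\mathrm{D}u(x))$. For $\xi\in\mathbb{R}^N$, $\xi^\top A\in\mathbb{R}^n$ for an $N\times n$ matrix $A$, and "$\cdot$" is the Euclidean inner product. *)

theory Defs
  imports "HOL-Analysis.Analysis"
begin

definition C1_on :: "'a::real_normed_vector set \<Rightarrow> ('a \<Rightarrow> 'b::real_normed_vector) \<Rightarrow> bool" where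
  "C1_on S f \<longleftrightarrow> (\<exists>f'. (\<forall>x\<in>S. (f has_derivative blinfun_apply (f' x)) (at x)) \<and> continuous_on S f')"

definition C2_on :: "'a::real_normed_vector set \<Rightarrow> ('a \<Rightarrow> 'b::real_normed_vector) \<Rightarrow> bool" where
  "C2_on S f \<longleftrightarrow> (\<exists>f'. (\<forall>x\<in>S. (f has_derivative blinfun_apply (f' x)) (at x)) \<and> C1_on S f')"

text \<open>Gradient matrix Du (N x n): (Du x) $ i $ j = d u_i / d x_j.\<close>
definition Dmat :: "(real^'n \<Rightarrow> real^'N) \<Rightarrow> real^'n \<Rightarrow> real^'n^'N" where
  "Dmat u x = matrix (frechet_derivative u (at x))"

definition grad :: "(real^'n \<Rightarrow> real) \<Rightarrow> real^'n \<Rightarrow> real^'n" where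
  "grad h x = (\<chi> j. frechet_derivative h (at x) (axis j 1))"

definition HP :: "((real^'n) \<times> (real^'N) \<times> (real^'n^'N) \<Rightarrow> real) \<Rightarrow> real^'n \<Rightarrow> real^'N \<Rightarrow> real^'n^'N \<Rightarrow> real^'n^'N" where
  "HP H x \<eta> P = (\<chi> i j. frechet_derivative (\<lambda>Q. H (x, \<eta>, Q)) (at P)
                          (\<chi> k l. if k = i \<and> l = j then 1 else 0))"

end

theory Submission
  imports Defs
begin

text \<open>Write \<open>h = H(\<cdot>, u, Du)\<close>. The equation says that \<open>H\<^sub>P\<close> annihilates the gradient of \<open>h\<close>,
  so every direction \<open>w = \<xi>\<^sup>T H\<^sub>P\<close> is tangent to the level sets of \<open>h\<close>, while by (b) the
  derivative of \<open>\<xi> \<cdot> u\<close> in direction \<open>w\<close> is at least \<open>c |w|\<^sup>2\<close>, which is positive by (a)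
  when \<open>N \<le> n\<close>. Hence \<open>h + \<epsilon> \<xi> \<cdot> u\<close> has no interior maximum, and letting \<open>\<epsilon> \<rightarrow> 0\<close> shows
  that \<open>h\<close> attains its maximum over the closure on the boundary; the minimum follows from
  \<open>-h\<close>. When \<open>N > n\<close>, (a) makes \<open>H\<^sub>P\<close> injective, so \<open>Dh = 0\<close> and any linear function
  can replace \<open>\<xi> \<cdot> u\<close>.\<close>

definition increasing_along_levels ::
    "'a::real_normed_vector set \<Rightarrow> ('a \<Rightarrow> real) \<Rightarrow> ('a \<Rightarrow> real) \<Rightarrow> bool"
  where "increasing_along_levels S h g \<longleftrightarrow> (\<forall>x\<in>S. \<exists>h' g' w. (h has_derivative h') (at x)
    \<and> (g has_derivative g') (at x) \<and> h' w = 0 \<and> g' w > 0)"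

lemma increasing_along_levels_subset:
  "increasing_along_levels T h g \<Longrightarrow> S \<subseteq> T \<Longrightarrow> increasing_along_levels S h g"
  unfolding increasing_along_levels_def by blast

lemma increasing_along_levels_uminus:
  assumes "increasing_along_levels S h g"
  shows "increasing_along_levels S (\<lambda>x. - h x) g"
  unfolding increasing_along_levels_def
proof
  fix x assume "x \<in> S"
  then obtain h' g' w where "(h has_derivative h') (at x)" "(g has_derivative g') (at x)"
    "h' w = 0" "g' w > 0"
    using assms unfolding increasing_along_levels_def by blast
  then show "\<exists>h' g' w. ((\<lambda>x. - h x) has_derivative h') (at x)
      \<and> (g has_derivative g') (at x) \<and> h' w = 0 \<and> g' w > 0"
    by (intro exI[of _ "\<lambda>v. - h' v"] exI[of _ g'] exI[of _ w]) (auto intro: derivative_intros)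
qed

lemma max_on_frontier_if_no_interior_max:
  fixes f :: "'a::topological_space \<Rightarrow> real"
  assumes "open U" "U \<noteq> {}" "compact (closure U)" "continuous_on (closure U) f"
    and no_max: "\<And>x. x \<in> U \<Longrightarrow> \<exists>z\<in>U. f x < f z"
  shows "\<exists>y\<in>frontier U. \<forall>x\<in>closure U. f x \<le> f y"
proof -
  obtain y where y: "y \<in> closure U" "\<forall>x\<in>closure U. f x \<le> f y"
    using continuous_attains_sup[OF assms(3) _ assms(4)] assms(2) by auto
  have "y \<notin> U"
    using y(2) no_max closure_subset by (metis not_le subsetD)
  with y assms(1) show ?thesis
    by (auto simp: frontier_def interior_open)
qed

lemma exists_greater_if_derivative_nonzero:
  fixes f :: "'a::real_normed_vector \<Rightarrow> real"
  assumes "open U" "x \<in> U" "(f has_derivative f') (at x)" "f' w \<noteq> 0"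
  shows "\<exists>z\<in>U. f x < f z"
  using differential_zero_maxmin[OF assms(2,1,3)] assms(4) by (metis not_le)

lemma perturbed_max_on_frontier:
  fixes h g :: "'a::real_normed_vector \<Rightarrow> real"
  assumes U: "open U" "U \<noteq> {}" "compact (closure U)"
    and cont: "continuous_on (closure U) h" "continuous_on (closure U) g"
    and "increasing_along_levels U h g" "e > 0"
  shows "\<exists>z\<in>frontier U. \<forall>x\<in>closure U. h x + e * g x \<le> h z + e * g z"
proof (rule max_on_frontier_if_no_interior_max[OF U])
  show "continuous_on (closure U) (\<lambda>x. h x + e * g x)"
    using cont by (intro continuous_intros)
  fix x assume "x \<in> U"
  then obtain h' g' w where hg: "(h has_derivative h') (at x)" "(g has_derivative g') (at x)"
    "h' w = 0" "g' w > 0"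
    using assms(6) unfolding increasing_along_levels_def by blast
  have "((\<lambda>x. h x + e * g x) has_derivative (\<lambda>v. h' v + e * g' v)) (at x)"
    by (intro derivative_intros hg)
  moreover have "h' w + e * g' w \<noteq> 0"
    using hg(3,4) \<open>e > 0\<close> by simp
  ultimately show "\<exists>z\<in>U. h x + e * g x < h z + e * g z"
    using exists_greater_if_derivative_nonzero[OF U(1) \<open>x \<in> U\<close>] by blast
qed

lemma max_on_frontier_if_increasing_along_levels:
  fixes h g :: "'a::euclidean_space \<Rightarrow> real"
  assumes U: "open U" "U \<noteq> {}" "compact (closure U)"
    and cont: "continuous_on (closure U) h" "continuous_on (closure U) g"
    and "increasing_along_levels U h g"
  shows "\<exists>y\<in>frontier U. \<forall>x\<in>closure U. h x \<le> h y"
proof -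
  note perturbed = perturbed_max_on_frontier[OF assms]
  have front: "frontier U \<subseteq> closure U"
    by (simp add: frontier_def)
  have "frontier U \<noteq> {}"
    using perturbed[of 1] by auto
  moreover have "compact (frontier U)"
    using U(3) by (intro compact_frontier_bounded bounded_subset[OF compact_imp_bounded closure_subset])
  moreover have "continuous_on (frontier U) h"
    using cont(1) front by (rule continuous_on_subset)
  ultimately obtain y where y: "y \<in> frontier U" "\<forall>z\<in>frontier U. h z \<le> h y"
    using continuous_attains_sup by blast
  obtain gmax where gmax: "\<forall>x\<in>closure U. g x \<le> gmax"
    using continuous_attains_sup[OF U(3) _ cont(2)] U(2) by auto
  obtain gmin where gmin: "\<forall>x\<in>closure U. gmin \<le> g x"
    using continuous_attains_inf[OF U(3) _ cont(2)] U(2) by auto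
  have "h x \<le> h y" if x: "x \<in> closure U" for x
  proof (rule field_le_epsilon)
    fix \<epsilon> :: real assume "\<epsilon> > 0"
    define C where "C = gmax - gmin"
    have "C \<ge> 0"
      using gmax gmin x unfolding C_def by fastforce
    define e where "e = \<epsilon> / (C + 1)"
    have "e > 0" "e * C \<le> \<epsilon>"
      using \<open>\<epsilon> > 0\<close> \<open>C \<ge> 0\<close> by (auto simp: e_def field_simps)
    obtain z where z: "z \<in> frontier U" "h x + e * g x \<le> h z + e * g z"
      using perturbed[OF \<open>e > 0\<close>] x by blast
    have "g z - g x \<le> C"
      using z(1) front x gmax gmin unfolding C_def by (smt (verit) subsetD)
    then have "e * g z - e * g x \<le> e * C"
      using \<open>e > 0\<close> by (simp flip: right_diff_distrib)
    moreover have "h z \<le> h y"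
      using y(2) z(1) by blast
    ultimately show "h x \<le> h y + \<epsilon>"
      using z(2) \<open>e * C \<le> \<epsilon>\<close> by linarith
  qed
  with y(1) show ?thesis by blast
qed

lemma SUP_eq_if_max_on_closure:
  fixes h :: "'a::topological_space \<Rightarrow> real"
  assumes "U \<noteq> {}" "continuous_on (closure U) h" "y \<in> closure U" "\<forall>x\<in>closure U. h x \<le> h y"
  shows "(SUP x\<in>U. h x) = h y"
proof (rule antisym)
  show "(SUP x\<in>U. h x) \<le> h y"
    using assms(1,4) closure_subset by (blast intro: cSUP_least)
  have "bdd_above (h ` U)"
    using assms(4) closure_subset by (intro bdd_aboveI2[where M = "h y"]) blast
  then have "h ` closure U \<subseteq> {..(SUP x\<in>U. h x)}"
    by (intro image_closure_subset[OF assms(2)]) (auto intro: cSUP_upper)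
  with assms(3) show "h y \<le> (SUP x\<in>U. h x)"
    by blast
qed

lemma frontier_max_principle:
  fixes h g :: "'a::euclidean_space \<Rightarrow> real"
  assumes "open U" "U \<noteq> {}" "compact (closure U)"
    and "continuous_on (closure U) h" "continuous_on (closure U) g"
    and "increasing_along_levels U h g"
  shows "\<exists>y\<in>frontier U. (\<forall>z\<in>frontier U. h z \<le> h y) \<and> (SUP x\<in>U. h x) = h y"
proof -
  obtain y where y: "y \<in> frontier U" "\<forall>x\<in>closure U. h x \<le> h y"
    using max_on_frontier_if_increasing_along_levels[OF assms] by blast
  have "y \<in> closure U" "frontier U \<subseteq> closure U"
    using y(1) by (auto simp: frontier_def)
  then have "(\<forall>z\<in>frontier U. h z \<le> h y) \<and> (SUP x\<in>U. h x) = h y"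
    using y(2) SUP_eq_if_max_on_closure[OF assms(2,4)] by blast
  with y(1) show ?thesis
    by blast
qed

lemma frontier_min_principle:
  fixes h g :: "'a::euclidean_space \<Rightarrow> real"
  assumes "open U" "U \<noteq> {}" "compact (closure U)"
    and "continuous_on (closure U) h" "continuous_on (closure U) g"
    and "increasing_along_levels U h g"
  shows "\<exists>y\<in>frontier U. (\<forall>z\<in>frontier U. h y \<le> h z) \<and> (INF x\<in>U. h x) = h y"
proof -
  obtain y where "y \<in> frontier U" "\<forall>z\<in>frontier U. - h z \<le> - h y"
      "(SUP x\<in>U. - h x) = - h y"
    using frontier_max_principle[OF assms(1-3) continuous_on_minus[OF assms(4)] assms(5)
        increasing_along_levels_uminus[OF assms(6)]]
    by blast
  moreover have "(INF x\<in>U. h x) = - (SUP x\<in>U. - h x)"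
    by (simp add: Inf_real_def image_image)
  ultimately show ?thesis
    by auto
qed

lemma bounded_linear_matrix_blinfun:
  "bounded_linear (\<lambda>B::((real^'n) \<Rightarrow>\<^sub>L (real^'m)). matrix (blinfun_apply B))"
proof (subst bounded_linear_componentwise_iff, intro ballI)
  fix b :: "real^'n^'m" assume "b \<in> Basis"
  then obtain i j where b: "b = axis i (axis j 1)"
    by (auto simp: Basis_vec_def)
  show "bounded_linear (\<lambda>B::((real^'n) \<Rightarrow>\<^sub>L (real^'m)). matrix (blinfun_apply B) \<bullet> b)"
    using bounded_linear_blinfun_matrix[of "axis j 1" "axis i (1::real)"]
    by (simp add: b matrix_def inner_axis)
qed

lemma C2_on_imp_differentiable: "C2_on S f \<Longrightarrow> x \<in> S \<Longrightarrow> f differentiable (at x)"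
  unfolding C2_on_def differentiable_def by blast

lemma has_derivative_Dmat:
  "u differentiable (at x) \<Longrightarrow> (u has_derivative (\<lambda>v. Dmat u x *v v)) (at x)"
  unfolding Dmat_def
  by (metis frechet_derivative_works has_derivative_bounded_linear matrix_vector_mul(3))

lemma Dmat_differentiable:
  assumes "open \<Omega>" "C2_on \<Omega> u" "x \<in> \<Omega>"
  shows "Dmat u differentiable (at x)"
proof -
  obtain u' u'' where u': "\<forall>y\<in>\<Omega>. (u has_derivative blinfun_apply (u' y)) (at y)"
    and u'': "\<forall>y\<in>\<Omega>. (u' has_derivative blinfun_apply (u'' y)) (at y)"
    using assms(2) unfolding C2_on_def C1_on_def by blast
  have "Dmat u y = matrix (blinfun_apply (u' y))" if "y \<in> \<Omega>" for y
    unfolding Dmat_def using u' that by (metis frechet_derivative_at)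
  moreover have "((\<lambda>y. matrix (blinfun_apply (u' y))) has_derivative
      (\<lambda>v. matrix (blinfun_apply (u'' x v)))) (at x)"
    using bounded_linear.has_derivative[OF bounded_linear_matrix_blinfun] u'' assms(3) by blast
  ultimately have "(Dmat u has_derivative (\<lambda>v. matrix (blinfun_apply (u'' x v)))) (at x)"
    using has_derivative_transform_within_open assms(1,3) by (metis (no_types, lifting))
  then show ?thesis
    unfolding differentiable_def by blast
qed

lemma differentiable_along_jet:
  assumes "open \<Omega>" "C2_on \<Omega> u" "x \<in> \<Omega>" "H differentiable (at (x, u x, Dmat u x))"
  shows "(\<lambda>y. H (y, u y, Dmat u y)) differentiable (at x)"
proof -
  have "(\<lambda>y. (y, u y, Dmat u y)) differentiable (at x)"
    using C2_on_imp_differentiable[OF assms(2,3)] Dmat_differentiable[OF assms(1-3)]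
    by (intro differentiable_Pair differentiable_ident)
  from differentiable_chain_at[OF this assms(4)] show ?thesis
    by (simp add: o_def)
qed

lemma frechet_derivative_eq_grad_inner:
  fixes h :: "real^'n \<Rightarrow> real"
  assumes "h differentiable (at x)"
  shows "frechet_derivative h (at x) w = grad h x \<bullet> w"
proof -
  have lin: "linear (frechet_derivative h (at x))"
    using assms frechet_derivative_works has_derivative_linear by blast
  have "frechet_derivative h (at x) w = frechet_derivative h (at x) (\<Sum>i\<in>UNIV. w $ i *\<^sub>R axis i 1)"
    using basis_expansion[of w] by (simp add: scalar_mult_eq_scaleR)
  also have "\<dots> = (\<Sum>i\<in>UNIV. w $ i * frechet_derivative h (at x) (axis i 1))"
    using lin by (simp add: linear_sum linear_scale)
  finally show ?thesis
    by (simp add: grad_def inner_vec_def mult.commute)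
qed

lemma level_ascent_direction_if_full_row_rank:
  fixes A P :: "real^'n^'N" and G :: "real^'n" and \<xi> :: "real^'N"
  assumes "rank A = CARD('N)" "A *v G = 0" "\<xi> \<noteq> 0" "c > 0"
    and "(\<xi> v* A) \<bullet> (\<xi> v* P) \<ge> c * (norm (\<xi> v* A))\<^sup>2"
  shows "G \<bullet> (\<xi> v* A) = 0" "\<xi> \<bullet> (P *v (\<xi> v* A)) > 0"
proof -
  show "G \<bullet> (\<xi> v* A) = 0"
    using assms(2) by (simp add: inner_commute[of G] dot_lmul_matrix)
  have "rank (transpose A) = CARD('N)"
    using assms(1) by (simp add: rank_transpose)
  then have "inj ((*v) (transpose A))"
    by (simp add: full_rank_injective)
  then have "\<xi> v* A \<noteq> 0"
    using assms(3) by (metis injD matrix_vector_mult_0_right transpose_matrix_vector)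
  then have "c * (norm (\<xi> v* A))\<^sup>2 > 0"
    using assms(4) by simp
  with assms(5) show "\<xi> \<bullet> (P *v (\<xi> v* A)) > 0"
    by (simp add: inner_commute[of "\<xi> v* A"] flip: dot_lmul_matrix)
qed

lemma increasing_along_levels_inner_if_full_row_rank:
  fixes A :: "real^'n \<Rightarrow> real^'n^'N" and h :: "real^'n \<Rightarrow> real" and u :: "real^'n \<Rightarrow> real^'N"
  assumes "\<forall>x\<in>\<Omega>. h differentiable (at x)" "\<forall>x\<in>\<Omega>. u differentiable (at x)"
    and "\<forall>x\<in>\<Omega>. rank (A x) = CARD('N)" "\<forall>x\<in>\<Omega>. A x *v grad h x = 0"
    and "\<forall>x\<in>\<Omega>. (\<xi> v* A x) \<bullet> (\<xi> v* Dmat u x) \<ge> c * (norm (\<xi> v* A x))\<^sup>2"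
    and "\<xi> \<noteq> 0" "c > 0"
  shows "increasing_along_levels \<Omega> h (\<lambda>y. \<xi> \<bullet> u y)"
  unfolding increasing_along_levels_def
proof (intro ballI exI conjI)
  fix x assume x: "x \<in> \<Omega>"
  show "(h has_derivative frechet_derivative h (at x)) (at x)"
    using assms(1) x frechet_derivative_works by blast
  show "((\<lambda>y. \<xi> \<bullet> u y) has_derivative (\<lambda>v. \<xi> \<bullet> (Dmat u x *v v))) (at x)"
    using has_derivative_Dmat assms(2) x by (auto intro: derivative_intros)
  from level_ascent_direction_if_full_row_rank[of "A x" "grad h x" \<xi> c "Dmat u x"]
  show "frechet_derivative h (at x) (\<xi> v* A x) = 0" "\<xi> \<bullet> (Dmat u x *v (\<xi> v* A x)) > 0"
    using assms x frechet_derivative_eq_grad_inner[of h x] by auto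
qed

lemma increasing_along_levels_inner_if_critical:
  fixes h :: "real^'n \<Rightarrow> real"
  assumes "\<forall>x\<in>\<Omega>. h differentiable (at x) \<and> grad h x = 0" "e \<noteq> 0"
  shows "increasing_along_levels \<Omega> h (\<lambda>y. e \<bullet> y)"
  unfolding increasing_along_levels_def
proof (intro ballI exI conjI)
  fix x assume x: "x \<in> \<Omega>"
  show "(h has_derivative frechet_derivative h (at x)) (at x)"
    using assms(1) x frechet_derivative_works by blast
  show "((\<lambda>y. e \<bullet> y) has_derivative (\<lambda>v. e \<bullet> v)) (at x)"
    by (intro derivative_intros)
  show "frechet_derivative h (at x) e = 0" "e \<bullet> e > 0"
    using assms x frechet_derivative_eq_grad_inner[of h x] by auto
qed

lemma exists_increasing_along_levels:
  fixes A :: "real^'n \<Rightarrow> real^'n^'N" and h :: "real^'n \<Rightarrow> real" and u :: "real^'n \<Rightarrow> real^'N"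
  assumes h: "\<forall>x\<in>\<Omega>. h differentiable (at x)" and u: "\<forall>x\<in>\<Omega>. u differentiable (at x)"
    and rank: "\<forall>x\<in>\<Omega>. rank (A x) = min CARD('N) CARD('n)"
    and kernel: "\<forall>x\<in>\<Omega>. A x *v grad h x = 0"
    and monotone: "\<forall>\<xi>. \<forall>x\<in>\<Omega>. (\<xi> v* A x) \<bullet> (\<xi> v* Dmat u x) \<ge> c * (norm (\<xi> v* A x))\<^sup>2"
    and "c > 0"
  shows "\<exists>g. continuous_on \<Omega> g \<and> increasing_along_levels \<Omega> h g"
proof (cases "CARD('N) \<le> CARD('n)")
  case True
  fix k :: 'N
  have "continuous_on \<Omega> (\<lambda>y. axis k 1 \<bullet> u y)"
    using u by (intro continuous_intros continuous_at_imp_continuous_on ballI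
        differentiable_imp_continuous_within) auto
  moreover have "increasing_along_levels \<Omega> h (\<lambda>y. axis k 1 \<bullet> u y)"
    using True rank \<open>c > 0\<close>
    by (intro increasing_along_levels_inner_if_full_row_rank[OF h u _ kernel])
      (auto simp: monotone axis_eq_0_iff)
  ultimately show ?thesis
    by blast
next
  case False
  fix k :: 'n
  have "grad h x = 0" if x: "x \<in> \<Omega>" for x
  proof -
    have "rank (A x) = CARD('n)"
      using rank x False by simp
    then have "inj ((*v) (A x))"
      by (simp add: full_rank_injective)
    then show ?thesis
      using kernel x by (metis injD matrix_vector_mult_0_right)
  qed
  then have "increasing_along_levels \<Omega> h (\<lambda>y. axis k 1 \<bullet> y)"
    using h by (intro increasing_along_levels_inner_if_critical) (auto simp: axis_eq_0_iff)
  moreover have "continuous_on \<Omega> (\<lambda>y. axis k 1 \<bullet> y)"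
    by (intro continuous_intros)
  ultimately show ?thesis
    by blast
qed

theorem proposition6:
  fixes \<Omega> :: "(real^'n) set"
    and H :: "(real^'n) \<times> (real^'N) \<times> (real^'n^'N) \<Rightarrow> real"
    and u :: "real^'n \<Rightarrow> real^'N"
    and c :: real
  assumes "open \<Omega>"
    and "C2_on (\<Omega> \<times> UNIV \<times> UNIV) H"
    and "C2_on \<Omega> u"
    and "\<forall>x\<in>\<Omega>. HP H x (u x) (Dmat u x) *v grad (\<lambda>y. H (y, u y, Dmat u y)) x = 0"
    and "\<forall>x\<in>\<Omega>. rank (HP H x (u x) (Dmat u x)) = min CARD('N) CARD('n)"
    and "c > 0"
    and "\<forall>\<xi>::real^'N. \<forall>x\<in>\<Omega>. \<forall>\<eta> P.
           (\<xi> v* HP H x \<eta> P) \<bullet> (\<xi> v* P) \<ge> c * (norm (\<xi> v* HP H x \<eta> P))\<^sup>2"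
  shows "\<forall>U. open U \<and> U \<noteq> {} \<and> compact (closure U) \<and> closure U \<subseteq> \<Omega> \<longrightarrow>
           (\<exists>y\<in>frontier U. (\<forall>z\<in>frontier U. H (z, u z, Dmat u z) \<le> H (y, u y, Dmat u y))
                \<and> (SUP x\<in>U. H (x, u x, Dmat u x)) = H (y, u y, Dmat u y))
         \<and> (\<exists>y\<in>frontier U. (\<forall>z\<in>frontier U. H (y, u y, Dmat u y) \<le> H (z, u z, Dmat u z))
                \<and> (INF x\<in>U. H (x, u x, Dmat u x)) = H (y, u y, Dmat u y))"
proof -
  define h where "h = (\<lambda>y. H (y, u y, Dmat u y))"
  have h_diff: "\<forall>x\<in>\<Omega>. h differentiable (at x)"
    unfolding h_def
    by (intro ballI differentiable_along_jet[OF assms(1,3)] C2_on_imp_differentiable[OF assms(2)]) auto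
  then have "continuous_on \<Omega> h"
    by (intro continuous_at_imp_continuous_on ballI differentiable_imp_continuous_within) auto
  have "\<forall>x\<in>\<Omega>. u differentiable (at x)"
    using C2_on_imp_differentiable[OF assms(3)] by blast
  moreover have "\<forall>\<xi>. \<forall>x\<in>\<Omega>. (\<xi> v* HP H x (u x) (Dmat u x)) \<bullet> (\<xi> v* Dmat u x)
      \<ge> c * (norm (\<xi> v* HP H x (u x) (Dmat u x)))\<^sup>2"
    using assms(7) by blast
  ultimately obtain g where "continuous_on \<Omega> g" and g: "increasing_along_levels \<Omega> h g"
    using exists_increasing_along_levels[OF h_diff _ assms(5)] assms(4,6) unfolding h_def by blast
  have "(\<exists>y\<in>frontier U. (\<forall>z\<in>frontier U. h z \<le> h y) \<and> (SUP x\<in>U. h x) = h y)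
      \<and> (\<exists>y\<in>frontier U. (\<forall>z\<in>frontier U. h y \<le> h z) \<and> (INF x\<in>U. h x) = h y)"
    if U: "open U" "U \<noteq> {}" "compact (closure U)" "closure U \<subseteq> \<Omega>" for U
  proof -
    have cont: "continuous_on (closure U) h" "continuous_on (closure U) g"
      using U(4) \<open>continuous_on \<Omega> h\<close> \<open>continuous_on \<Omega> g\<close> by (auto intro: continuous_on_subset)
    have "increasing_along_levels U h g"
      using g U(4) closure_subset by (blast intro: increasing_along_levels_subset)
    from frontier_max_principle[OF U(1-3) cont this] frontier_min_principle[OF U(1-3) cont this]
    show ?thesis ..
  qed
  then show ?thesis
    unfolding h_def by blast
qed

end
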